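(* Let $\psi(z)=\sum_{n\ge 0} b_n z^n\in\mathcal K$ have radius of convergence $R_\psi>0$. If $\psi\in\mathcal K^\star$ with apex $\tau\in(0,R_\psi)$, then the function $t\mapsto t/\psi(t)$ (1) is strictly increasing on $[0,\tau)$, (2) is strictly decreasing on $(\tau,R_\psi)$, and (3) attains its maximum at $t=\tau$. If $\psi\in\mathcal K\setminus\mathcal K^\star$, then $t\mapsto t/\psi(t)$ is strictly increasing on $(0,R_\psi)$.
   Context: $\mathcal K$ denotes the class of non-constant power series $f(z)=\sum_{n\ge0}a_nz^n$ with positive radius of convergence $R$, non-negative coefficients and $a_0>0$. The Khinchin family of $f\in\mathcal K$ is the family of random variables $(X_t)_{t\in[0,R)}$ with $\mathbf P(X_t=n)=a_nt^n/f(t)$ for $n\ge0$, $t\in(0,R)$, and $X_0\equiv0$; its mean is $m_f(t)=\mathbf E(X_t)=tf'(t)/f(t)$, which is increasing in $t$. $\mathcal K^\star$ is the subclass of $f\in\mathcal K$ with $\lim_{t\uparrow R}m_f(t)>1$; for such $f$ the apex is the unique $\tau\in(0,R)$ with $m_f(\tau)=1$. *)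

theory Defs
  imports "HOL-Analysis.Analysis"
begin

definition pser :: "(nat \<Rightarrow> real) \<Rightarrow> real \<Rightarrow> real" where
  "pser b t = (\<Sum>n. b n * t ^ n)"

definition in_K :: "(nat \<Rightarrow> real) \<Rightarrow> bool" where
  "in_K b \<longleftrightarrow> (\<forall>n. 0 \<le> b n) \<and> 0 < b 0 \<and> (\<exists>n>0. b n \<noteq> 0) \<and> 0 < conv_radius b"

definition kmean :: "(nat \<Rightarrow> real) \<Rightarrow> real \<Rightarrow> real" where
  "kmean b t = t * deriv (pser b) t / pser b t"

definition up_to_radius :: "ereal \<Rightarrow> real filter" where
  "up_to_radius R = (if R = \<infinity> then at_top else at_left (real_of_ereal R))"

definition in_Kstar :: "(nat \<Rightarrow> real) \<Rightarrow> bool" where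
  "in_Kstar b \<longleftrightarrow> in_K b \<and>
     (\<exists>L::ereal. ((\<lambda>t. ereal (kmean b t)) \<longlongrightarrow> L) (up_to_radius (conv_radius b)) \<and> L > 1)"

end

theory Submission
  imports Defs
begin

(* The derivative of t / psi(t) is (1 - m(t)) / psi(t), so t / psi(t) increases where the
  mean m is below 1 and decreases where it is above 1.  The mean is strictly increasing on
  [0, R): for c = m(s) > 0 the function
    x^(-c) (c psi(x) - x psi'(x)) = sum_n (c - n) b_n x^(n - c)
  vanishes at x = s and is strictly decreasing, since every term is non-increasing in x and
  the term n = 0 is strictly decreasing; hence c psi(t) < t psi'(t), i.e. m(t) > c, for t > s.
  If psi is not in K*, then m < 1 throughout: otherwise m exceeds 1 from some point on, and
  an increasing function tends to its supremum, which would then be a limit > 1. *)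

lemma ereal_le_less_trans: "x \<le> y \<Longrightarrow> ereal y < R \<Longrightarrow> ereal x < R"
  by (meson ereal_less_eq(3) order.strict_trans1)

lemma pser_sums:
  "ereal \<bar>x\<bar> < conv_radius b \<Longrightarrow> (\<lambda>n. b n * x ^ n) sums pser b x"
  using summable_in_conv_radius[of x b] unfolding pser_def by (simp add: summable_sums)

lemma pser_has_field_derivative:
  assumes "ereal \<bar>x\<bar> < conv_radius b"
  shows "(pser b has_field_derivative (\<Sum>n. diffs b n * x ^ n)) (at x)"
    and "summable (\<lambda>n. diffs b n * x ^ n)"
proof -
  obtain K where K: "\<bar>x\<bar> < K" "ereal K < conv_radius b"
    using ereal_dense2[OF assms] by auto
  have "summable (\<lambda>n. b n * y ^ n)" if "norm y < K" for y :: real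
  proof (rule summable_in_conv_radius)
    have "ereal (norm y) < ereal K" using that by simp
    then show "ereal (norm y) < conv_radius b" using K(2) by (rule order_less_trans)
  qed
  with K(1) show "(pser b has_field_derivative (\<Sum>n. diffs b n * x ^ n)) (at x)"
    and "summable (\<lambda>n. diffs b n * x ^ n)"
    unfolding pser_def[abs_def] by (auto intro!: termdiffs_strong'[of K] termdiff_converges)
qed

lemma x_deriv_pser_sums:
  assumes "ereal \<bar>x\<bar> < conv_radius b"
  shows "(\<lambda>n. real n * b n * x ^ n) sums (x * deriv (pser b) x)"
proof -
  have "deriv (pser b) x = (\<Sum>n. diffs b n * x ^ n)"
    using pser_has_field_derivative(1)[OF assms] by (rule DERIV_imp_deriv)
  then have "(\<lambda>n. x * (diffs b n * x ^ n)) sums (x * deriv (pser b) x)"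
    using pser_has_field_derivative(2)[OF assms] by (simp add: summable_sums sums_mult)
  then have "(\<lambda>n. real (Suc n) * b (Suc n) * x ^ Suc n) sums (x * deriv (pser b) x)"
    by (simp add: diffs_def algebra_simps)
  then show ?thesis
    by (subst (asm) sums_Suc_iff) simp
qed

lemma pser_pos:
  assumes "\<forall>n. 0 \<le> b n" "0 < b 0" "0 \<le> x" "ereal x < conv_radius b"
  shows "0 < pser b x"
proof -
  have sums: "(\<lambda>n. b n * x ^ n) sums pser b x" using assms(3,4) by (intro pser_sums) simp
  have "0 < (\<Sum>n. b n * x ^ n)"
    using assms(1,2,3) by (intro suminf_pos2[OF sums_summable[OF sums], of 0]) auto
  with sums show ?thesis by (simp add: sums_iff)
qed

lemma kmean_pos:
  assumes "in_K b" "0 < x" "ereal x < conv_radius b"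
  shows "0 < kmean b x"
proof -
  obtain n where n: "n > 0" "b n \<noteq> 0" using assms(1) unfolding in_K_def by auto
  have sums: "(\<lambda>n. real n * b n * x ^ n) sums (x * deriv (pser b) x)"
    using assms(2,3) by (intro x_deriv_pser_sums) simp
  have "0 < b n" using assms(1) n(2) unfolding in_K_def by (simp add: order_le_neq_trans)
  then have "0 < (\<Sum>n. real n * b n * x ^ n)"
    using assms(1,2) n(1) unfolding in_K_def
    by (intro suminf_pos2[OF sums_summable[OF sums], of n]) auto
  with sums have "0 < x * deriv (pser b) x" by (simp add: sums_iff)
  then show ?thesis
    using pser_pos[of b x] assms unfolding kmean_def in_K_def by simp
qed

lemma tilted_pser_sums:
  assumes "0 < x" "ereal x < conv_radius b"
  shows "(\<lambda>n. (c - real n) * b n * x powr (real n - c))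
           sums (x powr -c * (c * pser b x - x * deriv (pser b) x))"
proof -
  have "x powr (real n - c) = x powr -c * x ^ n" for n
    using assms(1) by (simp add: powr_diff powr_realpow powr_minus divide_inverse)
  then have "(\<lambda>n. (c - real n) * b n * x powr (real n - c))
               = (\<lambda>n. x powr -c * (c * (b n * x ^ n) - real n * b n * x ^ n))"
    by (simp add: fun_eq_iff algebra_simps)
  moreover have "ereal \<bar>x\<bar> < conv_radius b" using assms by simp
  ultimately show ?thesis
    by (simp only:) (intro sums_mult sums_diff pser_sums x_deriv_pser_sums)
qed

lemma tilted_pser_strict_decreasing:
  assumes b: "\<forall>n. 0 \<le> b n" "0 < b 0" and c: "0 < c"
    and st: "0 < s" "s < t" "ereal t < conv_radius b"
  shows "t powr -c * (c * pser b t - t * deriv (pser b) t)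
           < s powr -c * (c * pser b s - s * deriv (pser b) s)"
proof -
  define a where "a x n = (c - real n) * b n * x powr (real n - c)" for x n
  have "ereal s < ereal t" using st(2) by simp
  then have "ereal s < conv_radius b" using st(3) by (rule order_less_trans)
  then have sums: "a s sums (s powr -c * (c * pser b s - s * deriv (pser b) s))"
      "a t sums (t powr -c * (c * pser b t - t * deriv (pser b) t))"
    using st unfolding a_def by (auto intro: tilted_pser_sums)
  have "a t n \<le> a s n" for n
  proof (cases "real n \<le> c")
    case True
    then have "t powr (real n - c) \<le> s powr (real n - c)" using st by (intro powr_mono2') auto
    then show ?thesis unfolding a_def using True b(1) by (simp add: mult_left_mono)
  next
    case False
    then have "s powr (real n - c) \<le> t powr (real n - c)" using st by (intro powr_mono2) auto
    then show ?thesis unfolding a_def using False b(1) by (simp add: mult_left_mono mult_left_mono_neg)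
  qed
  moreover have "a t 0 < a s 0"
    using st b(2) c unfolding a_def by (simp add: powr_less_mono2_neg)
  moreover have diff: "(\<lambda>n. a s n - a t n) sums
      (s powr -c * (c * pser b s - s * deriv (pser b) s) - t powr -c * (c * pser b t - t * deriv (pser b) t))"
    using sums by (rule sums_diff)
  ultimately have "0 < (\<Sum>n. a s n - a t n)"
    by (intro suminf_pos2[OF sums_summable[OF diff], of 0]) auto
  with diff show ?thesis by (simp add: sums_iff)
qed

lemma kmean_strict_mono_on:
  assumes "in_K b"
  shows "strict_mono_on {t. 0 \<le> t \<and> ereal t < conv_radius b} (kmean b)"
proof (rule strict_mono_onI)
  fix s t assume s: "s \<in> {t. 0 \<le> t \<and> ereal t < conv_radius b}"
    and t: "t \<in> {t. 0 \<le> t \<and> ereal t < conv_radius b}" and "s < t"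
  show "kmean b s < kmean b t"
  proof (cases "s = 0")
    case True
    then show ?thesis using kmean_pos[OF assms, of t] t \<open>s < t\<close> by (simp add: kmean_def)
  next
    case False
    define c where "c = kmean b s"
    have b: "\<forall>n. 0 \<le> b n" "0 < b 0" using assms unfolding in_K_def by auto
    have ps: "0 < pser b s" and pt: "0 < pser b t" using s t b by (auto intro: pser_pos)
    have "0 < c" unfolding c_def using kmean_pos[OF assms] s False by simp
    moreover have "c * pser b s - s * deriv (pser b) s = 0"
      using ps by (simp add: c_def kmean_def)
    ultimately have "t powr -c * (c * pser b t - t * deriv (pser b) t) < 0"
      using tilted_pser_strict_decreasing[OF b, of c s t] s t False \<open>s < t\<close> by simp
    then have "c * pser b t < t * deriv (pser b) t" by (simp add: mult_less_0_iff)
    then have "c < t * deriv (pser b) t / pser b t" using pt by (simp add: field_simps)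
    then show ?thesis by (simp add: c_def kmean_def)
  qed
qed

lemma ratio_pser_has_real_derivative:
  assumes "in_K b" "0 \<le> x" "ereal x < conv_radius b"
  shows "((\<lambda>t. t / pser b t) has_real_derivative (1 - kmean b x) / pser b x) (at x)"
proof -
  have x: "ereal \<bar>x\<bar> < conv_radius b" using assms by simp
  have p: "0 < pser b x" using assms unfolding in_K_def by (auto intro: pser_pos)
  have "(pser b has_real_derivative deriv (pser b) x) (at x)"
    using pser_has_field_derivative(1)[OF x] by (simp add: DERIV_imp_deriv)
  from DERIV_divide[OF DERIV_ident this] p show ?thesis
    by (simp add: kmean_def field_simps)
qed

lemma ratio_pser_continuous_on:
  assumes "in_K b" "0 \<le> s" "ereal t < conv_radius b"
  shows "continuous_on {s..t} (\<lambda>t. t / pser b t)"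
proof (intro continuous_at_imp_continuous_on ballI)
  fix x assume "x \<in> {s..t}"
  then show "isCont (\<lambda>t. t / pser b t) x"
    using assms ereal_le_less_trans[of x t]
    by (intro DERIV_isCont[OF ratio_pser_has_real_derivative[OF assms(1)]]) auto
qed

lemma ratio_pser_increasing:
  assumes "in_K b" "0 \<le> s" "s < t" "ereal t < conv_radius b"
    and "\<And>x. s < x \<Longrightarrow> x < t \<Longrightarrow> kmean b x < 1"
  shows "s / pser b s < t / pser b t"
proof (rule DERIV_pos_imp_increasing_open[OF \<open>s < t\<close> _ ratio_pser_continuous_on[OF assms(1,2,4)]])
  fix x assume x: "s < x" "x < t"
  then have "0 < pser b x" "ereal x < conv_radius b"
    using assms ereal_le_less_trans[of x t] unfolding in_K_def by (auto intro: pser_pos)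
  with x show "\<exists>y. ((\<lambda>t. t / pser b t) has_real_derivative y) (at x) \<and> 0 < y"
    using assms by (intro exI[of _ "(1 - kmean b x) / pser b x"] conjI ratio_pser_has_real_derivative) auto
qed

lemma ratio_pser_decreasing:
  assumes "in_K b" "0 \<le> s" "s < t" "ereal t < conv_radius b"
    and "\<And>x. s < x \<Longrightarrow> x < t \<Longrightarrow> 1 < kmean b x"
  shows "t / pser b t < s / pser b s"
proof (rule DERIV_neg_imp_decreasing_open[OF \<open>s < t\<close> _ ratio_pser_continuous_on[OF assms(1,2,4)]])
  fix x assume x: "s < x" "x < t"
  then have "0 < pser b x" "ereal x < conv_radius b"
    using assms ereal_le_less_trans[of x t] unfolding in_K_def by (auto intro: pser_pos)
  with x show "\<exists>y. ((\<lambda>t. t / pser b t) has_real_derivative y) (at x) \<and> y < 0"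
    using assms by (intro exI[of _ "(1 - kmean b x) / pser b x"] conjI ratio_pser_has_real_derivative) (auto simp: divide_neg_pos)
qed

lemma eventually_up_to_radius:
  assumes "ereal a < R"
  shows "eventually (\<lambda>t. a < t \<and> ereal t < R) (up_to_radius R)"
proof (cases R)
  case (real r)
  with assms have "eventually (\<lambda>t. t \<in> {a<..<r}) (at_left r)"
    by (intro eventually_at_left_real) simp
  then show ?thesis unfolding up_to_radius_def using real by (auto elim: eventually_mono)
qed (use assms eventually_gt_at_top[of a] in \<open>auto simp: up_to_radius_def\<close>)

lemma tendsto_SUP_up_to_radius:
  fixes f :: "real \<Rightarrow> 'a::{complete_linorder, linorder_topology}"
  assumes mono: "mono_on {t. a < t \<and> ereal t < R} f" and "ereal a < R"
  shows "(f \<longlongrightarrow> (SUP t\<in>{t. a < t \<and> ereal t < R}. f t)) (up_to_radius R)"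
    (is "(f \<longlongrightarrow> Sup (f ` ?S)) _")
proof (rule order_tendstoI)
  fix y assume "y < Sup (f ` ?S)"
  then obtain s where s: "s \<in> ?S" "y < f s" by (auto simp: less_SUP_iff)
  from s(1) have "eventually (\<lambda>t. s < t \<and> ereal t < R) (up_to_radius R)"
    by (intro eventually_up_to_radius) simp
  then show "eventually (\<lambda>t. y < f t) (up_to_radius R)"
  proof (rule eventually_mono)
    fix t assume "s < t \<and> ereal t < R"
    with s(1) have "f s \<le> f t" by (intro mono_onD[OF mono]) auto
    with s(2) show "y < f t" by (rule order_less_le_trans)
  qed
next
  fix y assume "Sup (f ` ?S) < y"
  from eventually_up_to_radius[OF \<open>ereal a < R\<close>]
  show "eventually (\<lambda>t. f t < y) (up_to_radius R)"
  proof (rule eventually_mono)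
    fix t assume "a < t \<and> ereal t < R"
    then have "f t \<le> Sup (f ` ?S)" by (intro SUP_upper) simp
    also note \<open>Sup (f ` ?S) < y\<close>
    finally show "f t < y" .
  qed
qed

lemma kmean_less_one_if_not_Kstar:
  assumes K: "in_K b" and "\<not> in_Kstar b" "0 \<le> x" "ereal x < conv_radius b"
  shows "kmean b x < 1"
proof (rule ccontr)
  assume "\<not> kmean b x < 1"
  define S where "S = {t. x < t \<and> ereal t < conv_radius b}"
  have strict: "kmean b s < kmean b t" if "s \<in> insert x S" "t \<in> insert x S" "s < t" for s t
    using strict_mono_onD[OF kmean_strict_mono_on[OF K]] that assms(3,4) unfolding S_def by auto
  obtain t where t: "t \<in> S"
    using ereal_dense2[OF assms(4)] unfolding S_def by force
  have "1 < ereal (kmean b t)"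
    using strict[of x t] t \<open>\<not> kmean b x < 1\<close> unfolding S_def by auto
  also have "\<dots> \<le> (SUP s\<in>S. ereal (kmean b s))" using t by (rule SUP_upper)
  finally have "1 < (SUP s\<in>S. ereal (kmean b s))" .
  moreover have "mono_on S (\<lambda>s. ereal (kmean b s))"
    using strict by (intro mono_onI) (auto simp: order_le_less)
  then have "((\<lambda>s. ereal (kmean b s)) \<longlongrightarrow> (SUP s\<in>S. ereal (kmean b s))) (up_to_radius (conv_radius b))"
    unfolding S_def using assms(4) by (rule tendsto_SUP_up_to_radius)
  ultimately have "in_Kstar b" using K unfolding in_Kstar_def by blast
  with \<open>\<not> in_Kstar b\<close> show False ..
qed

lemma ratio_pser_increasing_below_apex:
  assumes K: "in_K b" and \<tau>: "ereal \<tau> < conv_radius b" "kmean b \<tau> = 1"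
    and st: "0 \<le> s" "s < t" "t \<le> \<tau>"
  shows "s / pser b s < t / pser b t"
proof (rule ratio_pser_increasing[OF K st(1,2)])
  show "ereal t < conv_radius b" using st(3) \<tau>(1) by (rule ereal_le_less_trans)
  fix x assume "s < x" "x < t"
  with st \<tau> show "kmean b x < 1"
    using strict_mono_onD[OF kmean_strict_mono_on[OF K], of x \<tau>] ereal_le_less_trans[of x \<tau>] by simp
qed

lemma ratio_pser_decreasing_above_apex:
  assumes K: "in_K b" and \<tau>: "0 \<le> \<tau>" "kmean b \<tau> = 1"
    and st: "\<tau> \<le> s" "s < t" "ereal t < conv_radius b"
  shows "t / pser b t < s / pser b s"
proof (rule ratio_pser_decreasing[OF K _ st(2,3)])
  show "0 \<le> s" using \<tau>(1) st(1) by simp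
  fix x assume "s < x" "x < t"
  with st \<tau> show "1 < kmean b x"
    using strict_mono_onD[OF kmean_strict_mono_on[OF K], of \<tau> x]
      ereal_le_less_trans[of \<tau> t] ereal_le_less_trans[of x t] by simp
qed

lemma ratio_pser_strict_mono_on_if_not_Kstar:
  assumes K: "in_K b" and "\<not> in_Kstar b"
  shows "strict_mono_on {t. 0 < t \<and> ereal t < conv_radius b} (\<lambda>t. t / pser b t)"
proof (rule strict_mono_onI)
  fix s t assume s: "s \<in> {t. 0 < t \<and> ereal t < conv_radius b}"
    and t: "t \<in> {t. 0 < t \<and> ereal t < conv_radius b}" and "s < t"
  have "ereal x < conv_radius b" if "x < t" for x
    using that t by (intro ereal_le_less_trans[of x t]) auto
  with \<open>\<not> in_Kstar b\<close> \<open>s < t\<close> s t show "s / pser b s < t / pser b t"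
    by (intro ratio_pser_increasing[OF K] kmean_less_one_if_not_Kstar[OF K]) auto
qed

theorem lemma4p1:
  fixes b :: "nat \<Rightarrow> real"
  assumes K: "in_K b"
  shows "(\<forall>\<tau>. in_Kstar b \<and> 0 < \<tau> \<and> ereal \<tau> < conv_radius b \<and> kmean b \<tau> = 1 \<longrightarrow>
             strict_mono_on {0..<\<tau>} (\<lambda>t. t / pser b t)
           \<and> (\<forall>s t. \<tau> < s \<and> s < t \<and> ereal t < conv_radius b \<longrightarrow> t / pser b t < s / pser b s)
           \<and> (\<forall>t. 0 \<le> t \<and> ereal t < conv_radius b \<longrightarrow> t / pser b t \<le> \<tau> / pser b \<tau>))
       \<and> (\<not> in_Kstar b \<longrightarrow>
           strict_mono_on {t. 0 < t \<and> ereal t < conv_radius b} (\<lambda>t. t / pser b t))"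
proof (intro conjI allI impI)
  fix \<tau> assume "in_Kstar b \<and> 0 < \<tau> \<and> ereal \<tau> < conv_radius b \<and> kmean b \<tau> = 1"
  then have \<tau>: "0 \<le> \<tau>" "ereal \<tau> < conv_radius b" "kmean b \<tau> = 1" by auto
  note inc = ratio_pser_increasing_below_apex[OF K \<tau>(2,3)]
  note dec = ratio_pser_decreasing_above_apex[OF K \<tau>(1,3)]
  show "strict_mono_on {0..<\<tau>} (\<lambda>t. t / pser b t)"
    by (rule strict_mono_onI) (use inc in auto)
  show "t / pser b t < s / pser b s" if "\<tau> < s \<and> s < t \<and> ereal t < conv_radius b" for s t
    using dec that by simp
  show "t / pser b t \<le> \<tau> / pser b \<tau>" if "0 \<le> t \<and> ereal t < conv_radius b" for t
    using inc[of t \<tau>] dec[of \<tau> t] that by (cases t \<tau> rule: linorder_cases) auto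
next
  assume "\<not> in_Kstar b"
  with K show "strict_mono_on {t. 0 < t \<and> ereal t < conv_radius b} (\<lambda>t. t / pser b t)"
    by (rule ratio_pser_strict_mono_on_if_not_Kstar)
qed

end
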